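(* Let $n\ge1$, $K\ge1$ and $p_n\in[0,1]$. Let $(\mathcal{G}(n),\mathcal{A}_1(n),\dots,\mathcal{A}_K(n))$ be the output of the SFAP exploration algorithm, and let $\mathcal{N}_i(n)$ be the set of vertices using frequency $i$ in the final state of the SFAP model on $G(n,p_n)$ (both described in the context). Then the joint distribution of $(\mathcal{G}(n),\mathcal{A}_1(n),\dots,\mathcal{A}_K(n))$ is identical to that of $(G(n,p_n),\mathcal{N}_1(n),\dots,\mathcal{N}_K(n))$.
   Context: $G(n,p_n)$ is the Erdős–Rényi random graph on $[n]$ with independent edge probability $p_n$. SFAP (sequential frequency assignment) model: given a realization of $G(n,p_n)$, all vertices start with no frequency ($f_v(0)=0$). At each step a vertex $v$ is chosen uniformly at random among vertices not selected before; if the set $\{1,\dots,K\}\setminus\{f_u: u \text{ a neighbour of } v,\ f_u\ne0\}$ is nonempty, $v$ receives its minimum as frequency; otherwise $v$ gets frequency $0$ (frozen). $\mathcal{N}_i(n)$ is the set of vertices with frequency $i$ after $n$ steps. SFAP exploration algorithm: maintain $\mathcal{A}_k(t)$ ($1\le k\le K$: explored vertices with frequency $k$; $\mathcal{A}_0(t)$: explored frozen vertices) and unexplored set $\mathcal{U}(t)$, initially $\mathcal{A}_k(0)=\varnothing$, $\mathcal{U}(0)=[n]$. At step $t+1$, select $v\in\mathcal{U}(t)$ uniformly at random, remove it from $\mathcal{U}$, and join it to each vertex of $\mathcal{A}(t)=\bigcup_{k=0}^K\mathcal{A}_k(t)$ independently with probability $p_n$. If $\mathcal{F}_v=\{1,\dots,K\}\setminus\{k\ge1: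 v\text{ joined to some vertex of }\mathcal{A}_k(t)\}$ is nonempty, $v$ joins $\mathcal{A}_{\min\mathcal{F}_v}$; otherwise $v$ joins $\mathcal{A}_0$. After $n$ steps the algorithm outputs $(\mathcal{A}_1(n),\dots,\mathcal{A}_K(n))$ and the graph $\mathcal{G}(n)$ on $[n]$ of all edges added. *)

theory Defs
  imports "HOL-Probability.Probability" "HOL-Combinatorics.Multiset_Permutations"
begin

text \<open>Vertex set [n] = {1..n}. A graph on [n] is a set of edges, each edge a
two-element set {u,v} with u \<noteq> v. Frequency 0 means "no frequency / frozen".\<close>

definition all_edges :: "nat \<Rightarrow> nat set set" where
  "all_edges n = {{u, v} | u v. u \<in> {1..n} \<and> v \<in> {1..n} \<and> u \<noteq> v}"

definition erdos_renyi :: "nat \<Rightarrow> real \<Rightarrow> nat set set pmf" where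
  "erdos_renyi n p =
     map_pmf (\<lambda>b. {e \<in> all_edges n. b e}) (Pi_pmf (all_edges n) False (\<lambda>_. bernoulli_pmf p))"

definition sfap_assign :: "nat \<Rightarrow> nat set set \<Rightarrow> nat \<Rightarrow> (nat \<Rightarrow> nat) \<Rightarrow> (nat \<Rightarrow> nat)" where
  "sfap_assign K E v f =
     (let F = {1..K} - {f u | u. {u, v} \<in> E \<and> f u \<noteq> 0}
      in f(v := (if F = {} then 0 else Min F)))"

definition sfap_freq :: "nat \<Rightarrow> nat set set \<Rightarrow> nat list \<Rightarrow> (nat \<Rightarrow> nat)" where
  "sfap_freq K E ord_list = fold (sfap_assign K E) ord_list (\<lambda>_. 0)"

text \<open>SFAP model on G(n,p): the ord_list in which vertices are selected (uniformly among
  not-yet-selected vertices) is a uniform random permutation of [n], independent of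
  the graph.\<close>
definition sfap_model :: "nat \<Rightarrow> nat \<Rightarrow> real \<Rightarrow> (nat set set \<times> nat set list) pmf" where
  "sfap_model n K p =
     do { E \<leftarrow> erdos_renyi n p;
          ord_list \<leftarrow> pmf_of_set (permutations_of_set {1..n});
          let f = sfap_freq K E ord_list;
          return_pmf (E, map (\<lambda>i. {v \<in> {1..n}. f v = i}) [1..<K+1]) }"

text \<open>State of the exploration algorithm: (explored set, frequency map, edges so far).
  Explored vertices v have f v = k \<in> {1..K} (i.e. v \<in> A_k) or f v = 0 (v \<in> A_0);
  the unexplored set is U = [n] minus the explored set.\<close>
type_synonym explore_state = "nat set \<times> (nat \<Rightarrow> nat) \<times> nat set set"

definition explore_step :: "nat \<Rightarrow> nat \<Rightarrow> real \<Rightarrow> explore_state \<Rightarrow> explore_state pmf" where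
  "explore_step n K p s =
     (case s of (X, f, E) \<Rightarrow>
       if {1..n} - X = {} then return_pmf s
       else do { v \<leftarrow> pmf_of_set ({1..n} - X);
                 b \<leftarrow> Pi_pmf X False (\<lambda>_. bernoulli_pmf p);
                 let F = {1..K} - {f u | u. u \<in> X \<and> b u \<and> f u \<ge> 1};
                 return_pmf (insert v X,
                             f(v := (if F = {} then 0 else Min F)),
                             E \<union> {{u, v} | u. u \<in> X \<and> b u}) })"

fun explore_iter :: "nat \<Rightarrow> nat \<Rightarrow> real \<Rightarrow> nat \<Rightarrow> explore_state pmf" where
  "explore_iter n K p 0 = return_pmf ({}, (\<lambda>_. 0), {})"
| "explore_iter n K p (Suc t) = bind_pmf (explore_iter n K p t) (explore_step n K p)"

definition explore_output :: "nat \<Rightarrow> nat \<Rightarrow> real \<Rightarrow> (nat set set \<times> nat set list) pmf" where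
  "explore_output n K p =
     map_pmf (\<lambda>(X, f, E). (E, map (\<lambda>i. {v \<in> X. f v = i}) [1..<K+1])) (explore_iter n K p n)"

end

theory Submission
  imports Defs
begin

text \<open>Describe the exploration algorithm through the order in which it explores vertices.
  By induction on t, after t steps this order is a uniformly random injective sequence xs of
  length t, the revealed graph is an Erdos-Renyi graph on set xs, and the frequencies are those
  the SFAP model assigns along xs. Indeed, the coins joining a new vertex v to set xs expose
  exactly the new edges of the random graph on insert v (set xs), and edges at the still
  uncoloured v do not affect the frequencies already assigned along xs. After n steps xs is a
  uniform permutation of [n] independent of the graph, which is the SFAP model.\<close>

definition distinct_lists :: "'a set \<Rightarrow> nat \<Rightarrow> 'a list set" where
  "distinct_lists A k = {xs. length xs = k \<and> distinct xs \<and> set xs \<subseteq> A}"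

lemma finite_distinct_lists: "finite A \<Longrightarrow> finite (distinct_lists A k)"
  unfolding distinct_lists_def
  by (rule finite_subset[OF _ finite_lists_length_eq[of A k]]) auto

lemma distinct_lists_nonempty:
  assumes "finite A" "k \<le> card A"
  shows "distinct_lists A k \<noteq> {}"
proof -
  obtain xs where "set xs = A" "distinct xs"
    using finite_distinct_list[OF assms(1)] by blast
  then have "take k xs \<in> distinct_lists A k"
    using assms(2) by (auto simp: distinct_lists_def distinct_card dest: in_set_takeD)
  then show ?thesis by blast
qed

lemma card_Diff_distinct_list: "xs \<in> distinct_lists A k \<Longrightarrow> card (A - set xs) = card A - k"
  by (auto simp: distinct_lists_def card_Diff_subset distinct_card)

lemma Diff_set_distinct_list_nonempty:
  "xs \<in> distinct_lists A k \<Longrightarrow> k < card A \<Longrightarrow> A - set xs \<noteq> {}"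
  using card_Diff_distinct_list[of xs A k] by force

lemma distinct_lists_Suc:
  "distinct_lists A (Suc k) = (\<Union>xs\<in>distinct_lists A k. (\<lambda>v. xs @ [v]) ` (A - set xs))"
  by (auto simp: distinct_lists_def length_Suc_conv_rev image_iff)

lemma distinct_lists_card: "finite A \<Longrightarrow> distinct_lists A (card A) = permutations_of_set A"
  unfolding distinct_lists_def permutations_of_set_def
  by (auto simp: distinct_card) (metis card_subset_eq distinct_card)

lemma pmf_of_set_distinct_lists_Suc:
  assumes "finite A" "k < card A"
  shows "pmf_of_set (distinct_lists A (Suc k)) =
           do { xs \<leftarrow> pmf_of_set (distinct_lists A k);
                map_pmf (\<lambda>v. xs @ [v]) (pmf_of_set (A - set xs)) }"
proof -
  have inj: "inj_on (\<lambda>v. xs @ [v]) B" for xs :: "'a list" and B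
    by (simp add: inj_on_def)
  show ?thesis
    unfolding distinct_lists_Suc using assms Diff_set_distinct_list_nonempty
    by (subst pmf_of_set_UN[where n = "card A - k"])
       (auto simp: card_image[OF inj] card_Diff_distinct_list finite_distinct_lists
          distinct_lists_nonempty disjoint_family_on_def map_pmf_of_set_inj[OF inj]
          intro!: bind_pmf_cong)
qed

definition edges_on :: "'a set \<Rightarrow> 'a set set" where
  "edges_on S = {{u, v} | u v. u \<in> S \<and> v \<in> S \<and> u \<noteq> v}"

lemma finite_edges_on: "finite S \<Longrightarrow> finite (edges_on S)"
proof -
  assume "finite S"
  have "edges_on S \<subseteq> (\<lambda>(u, v). {u, v}) ` (S \<times> S)"
    unfolding edges_on_def by auto
  then show ?thesis
    using \<open>finite S\<close> by (meson finite_SigmaI finite_imageI finite_subset)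
qed

definition random_graph :: "real \<Rightarrow> 'a set \<Rightarrow> 'a set set pmf" where
  "random_graph p S =
     map_pmf (\<lambda>b. {e \<in> edges_on S. b e}) (Pi_pmf (edges_on S) False (\<lambda>_. bernoulli_pmf p))"

lemma erdos_renyi_conv_random_graph: "erdos_renyi n p = random_graph p {1..n}"
  unfolding random_graph_def erdos_renyi_def edges_on_def all_edges_def ..

lemma random_graph_empty: "random_graph p {} = return_pmf {}"
  by (simp add: random_graph_def edges_on_def)

lemma set_pmf_random_graph: "E \<in> set_pmf (random_graph p S) \<Longrightarrow> E \<subseteq> edges_on S"
  by (auto simp: random_graph_def)

lemma random_graph_insert:
  assumes fin: "finite S" and v: "v \<notin> S"
  shows "random_graph p (insert v S) =
           do { E \<leftarrow> random_graph p S;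
                map_pmf (\<lambda>b. E \<union> {{u, v} | u. u \<in> S \<and> b u})
                  (Pi_pmf S False (\<lambda>_. bernoulli_pmf p)) }"
proof -
  define h where "h = (\<lambda>u. {u, v})"
  have edges_insert: "edges_on (insert v S) = edges_on S \<union> h ` S"
    unfolding edges_on_def h_def using v by (auto simp: insert_commute)
  have disj: "edges_on S \<inter> h ` S = {}"
    unfolding edges_on_def h_def using v by (auto simp: doubleton_eq_iff)
  have bij: "bij_betw h S (h ` S)"
    unfolding h_def using v by (auto simp: bij_betw_def inj_on_def doubleton_eq_iff)
  have out: "x \<notin> S \<Longrightarrow> h x \<notin> h ` S" for x
    unfolding h_def using v by (auto simp: doubleton_eq_iff)
  let ?coins = "\<lambda>I. Pi_pmf I False (\<lambda>_. bernoulli_pmf p)"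
  have coins_S: "?coins S = map_pmf (\<lambda>g. g \<circ> h) (?coins (h ` S))"
    by (rule Pi_pmf_bij_betw[OF fin bij out])
  have coins_Un: "?coins (edges_on S \<union> h ` S) =
      map_pmf (\<lambda>(f, g) x. if x \<in> edges_on S then f x else g x)
        (pair_pmf (?coins (edges_on S)) (?coins (h ` S)))"
    using fin by (intro Pi_pmf_union finite_edges_on disj) auto
  have split: "{e \<in> edges_on S \<union> h ` S. if e \<in> edges_on S then f e else g e} =
      {e \<in> edges_on S. f e} \<union> {{u, v} | u. u \<in> S \<and> (g \<circ> h) u}" for f g
    using disj unfolding h_def by auto
  have "random_graph p (insert v S) =
      map_pmf (\<lambda>(f, g). {e \<in> edges_on S. f e} \<union> {{u, v} | u. u \<in> S \<and> (g \<circ> h) u})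
        (pair_pmf (?coins (edges_on S)) (?coins (h ` S)))"
    unfolding random_graph_def edges_insert coins_Un map_pmf_comp using split
    by (simp add: case_prod_unfold)
  then show ?thesis
    unfolding random_graph_def coins_S
    by (simp add: pair_pmf_def map_bind_pmf bind_map_pmf map_pmf_def bind_assoc_pmf
        bind_return_pmf)
qed

lemma sfap_assign_other: "u \<noteq> w \<Longrightarrow> sfap_assign K E w g u = g u"
  by (simp add: sfap_assign_def Let_def)

lemma fold_sfap_assign_notin: "u \<notin> set xs \<Longrightarrow> fold (sfap_assign K E) xs g u = g u"
  by (induction xs arbitrary: g) (auto simp: sfap_assign_other)

lemma sfap_assign_Un_edges_at:
  assumes "w \<noteq> v" "g v = 0" "\<forall>e\<in>N. v \<in> e"
  shows "sfap_assign K (E \<union> N) w g = sfap_assign K E w g"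
proof -
  have "{g u | u. {u, w} \<in> E \<union> N \<and> g u \<noteq> 0} = {g u | u. {u, w} \<in> E \<and> g u \<noteq> 0}"
    using assms by fastforce
  then show ?thesis
    unfolding sfap_assign_def by (simp only:)
qed

lemma fold_sfap_assign_Un_edges_at:
  "v \<notin> set xs \<Longrightarrow> g v = 0 \<Longrightarrow> \<forall>e\<in>N. v \<in> e \<Longrightarrow>
     fold (sfap_assign K (E \<union> N)) xs g = fold (sfap_assign K E) xs g"
proof (induction xs arbitrary: g)
  case (Cons w xs)
  then have "sfap_assign K (E \<union> N) w g = sfap_assign K E w g"
    by (intro sfap_assign_Un_edges_at) auto
  with Cons show ?case
    by (simp add: sfap_assign_other)
qed simp

lemma sfap_freq_notin: "u \<notin> set xs \<Longrightarrow> sfap_freq K E xs u = 0"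
  by (simp add: sfap_freq_def fold_sfap_assign_notin)

text \<open>The right-hand side is the colour update performed by explore_step.\<close>
lemma sfap_freq_snoc:
  assumes "E \<subseteq> edges_on (set xs)" "v \<notin> set xs"
  shows "sfap_freq K (E \<union> {{u, v} | u. u \<in> set xs \<and> b u}) (xs @ [v]) =
           (let f = sfap_freq K E xs;
                F = {1..K} - {f u | u. u \<in> set xs \<and> b u \<and> f u \<ge> 1}
            in f(v := (if F = {} then 0 else Min F)))"
proof -
  define N where "N = {{u, v} | u. u \<in> set xs \<and> b u}"
  define f where "f = sfap_freq K E xs"
  have prefix: "fold (sfap_assign K (E \<union> N)) xs (\<lambda>_. 0) = f"
    unfolding f_def sfap_freq_def using assms(2)
    by (intro fold_sfap_assign_Un_edges_at) (auto simp: N_def)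
  have neighbours:
    "{f u | u. {u, v} \<in> E \<union> N \<and> f u \<noteq> 0} = {f u | u. u \<in> set xs \<and> b u \<and> f u \<ge> 1}"
    using assms sfap_freq_notin[of _ xs K E]
    by (fastforce simp: N_def f_def edges_on_def doubleton_eq_iff)
  have "sfap_freq K (E \<union> N) (xs @ [v]) = sfap_assign K (E \<union> N) v f"
    unfolding sfap_freq_def using prefix by simp
  then show ?thesis
    unfolding N_def[symmetric] f_def[symmetric] sfap_assign_def Let_def neighbours .
qed

lemma explore_step_sfap_prefix:
  assumes unexplored: "{1..n} - set xs \<noteq> {}"
  shows "do { E \<leftarrow> random_graph p (set xs); explore_step n K p (set xs, sfap_freq K E xs, E) } =
         do { v \<leftarrow> pmf_of_set ({1..n} - set xs);
              E \<leftarrow> random_graph p (set (xs @ [v]));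
              return_pmf (set (xs @ [v]), sfap_freq K E (xs @ [v]), E) }"
proof -
  let ?coins = "Pi_pmf (set xs) False (\<lambda>_. bernoulli_pmf p)"
  let ?explored = "\<lambda>E v b. return_pmf (insert v (set xs),
      let f = sfap_freq K E xs; F = {1..K} - {f u | u. u \<in> set xs \<and> b u \<and> f u \<ge> 1}
      in f(v := (if F = {} then 0 else Min F)),
      E \<union> {{u, v} | u. u \<in> set xs \<and> b u})"
  have extend: "do { E \<leftarrow> random_graph p (set (xs @ [v]));
                     return_pmf (set (xs @ [v]), sfap_freq K E (xs @ [v]), E) } =
                do { E \<leftarrow> random_graph p (set xs); b \<leftarrow> ?coins; ?explored E v b }"
    if "v \<notin> set xs" for v
    using that
    by (auto simp: random_graph_insert bind_map_pmf bind_assoc_pmf bind_return_pmf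
        sfap_freq_snoc Let_def dest: set_pmf_random_graph intro!: bind_pmf_cong)
  have "do { E \<leftarrow> random_graph p (set xs); explore_step n K p (set xs, sfap_freq K E xs, E) } =
        do { E \<leftarrow> random_graph p (set xs); v \<leftarrow> pmf_of_set ({1..n} - set xs);
             b \<leftarrow> ?coins; ?explored E v b }"
    using unexplored by (simp add: explore_step_def Let_def)
  also have "\<dots> = do { v \<leftarrow> pmf_of_set ({1..n} - set xs);
                      E \<leftarrow> random_graph p (set xs); b \<leftarrow> ?coins; ?explored E v b }"
    by (rule bind_commute_pmf)
  also have "\<dots> = do { v \<leftarrow> pmf_of_set ({1..n} - set xs);
                      E \<leftarrow> random_graph p (set (xs @ [v]));
                      return_pmf (set (xs @ [v]), sfap_freq K E (xs @ [v]), E) }"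
    by (rule bind_pmf_cong[OF refl], rule extend[symmetric]) (use unexplored in simp)
  finally show ?thesis .
qed

lemma explore_iter_eq:
  "t \<le> n \<Longrightarrow> explore_iter n K p t =
     do { xs \<leftarrow> pmf_of_set (distinct_lists {1..n} t);
          E \<leftarrow> random_graph p (set xs);
          return_pmf (set xs, sfap_freq K E xs, E) }"
proof (induction t)
  case 0
  have "distinct_lists {1..n} 0 = {[]}"
    by (auto simp: distinct_lists_def)
  then show ?case
    by (simp add: random_graph_empty sfap_freq_def pmf_of_set_singleton bind_return_pmf)
next
  case (Suc t)
  have "explore_iter n K p (Suc t) =
        do { xs \<leftarrow> pmf_of_set (distinct_lists {1..n} t);
             E \<leftarrow> random_graph p (set xs);
             explore_step n K p (set xs, sfap_freq K E xs, E) }"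
    using Suc by (simp add: bind_assoc_pmf bind_return_pmf)
  also have "\<dots> = do { xs \<leftarrow> pmf_of_set (distinct_lists {1..n} t);
                      v \<leftarrow> pmf_of_set ({1..n} - set xs);
                      E \<leftarrow> random_graph p (set (xs @ [v]));
                      return_pmf (set (xs @ [v]), sfap_freq K E (xs @ [v]), E) }"
    using Suc.prems
    by (intro bind_pmf_cong refl explore_step_sfap_prefix Diff_set_distinct_list_nonempty)
       (auto simp: finite_distinct_lists distinct_lists_nonempty)
  also have "\<dots> = do { xs \<leftarrow> pmf_of_set (distinct_lists {1..n} (Suc t));
                      E \<leftarrow> random_graph p (set xs);
                      return_pmf (set xs, sfap_freq K E xs, E) }"
    using Suc.prems by (simp add: pmf_of_set_distinct_lists_Suc bind_map_pmf bind_assoc_pmf)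
  finally show ?case .
qed

theorem proposition3:
  fixes n K :: nat and p :: real
  assumes "n \<ge> 1" and "K \<ge> 1" and "0 \<le> p" and "p \<le> 1"
  shows "explore_output n K p = sfap_model n K p"
proof -
  let ?perms = "permutations_of_set {1..n}"
  let ?classes = "\<lambda>V E xs. map (\<lambda>i. {v \<in> V. sfap_freq K E xs v = i}) [1..<K+1]"
  have orders: "distinct_lists {1..n} n = ?perms"
    using distinct_lists_card[of "{1..n}"] by simp
  have "explore_output n K p =
        do { xs \<leftarrow> pmf_of_set ?perms; E \<leftarrow> random_graph p (set xs);
             return_pmf (E, ?classes (set xs) E xs) }"
    unfolding explore_output_def explore_iter_eq[OF order_refl] orders
    by (simp add: map_bind_pmf)
  also have "\<dots> = do { xs \<leftarrow> pmf_of_set ?perms; E \<leftarrow> erdos_renyi n p;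
                      return_pmf (E, ?classes {1..n} E xs) }"
    by (rule bind_pmf_cong[OF refl])
       (simp add: erdos_renyi_conv_random_graph permutations_of_setD)
  also have "\<dots> = sfap_model n K p"
    unfolding sfap_model_def Let_def by (rule bind_commute_pmf)
  finally show ?thesis .
qed

end
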